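(* Let $X$ be a $T_1$ topological space with at least three points. Then $\mathrm{diam}(\Gamma(C_c(X)_F))=\mathrm{gr}(\Gamma(C_c(X)_F))=3$.
   Context: $C_c(X)_F$ denotes the set of all functions $f:X\to\mathbb{R}$ whose range is countable and whose set of points of discontinuity is finite; it is a commutative ring under pointwise operations. $\Gamma(C_c(X)_F)$ is the zero-divisor graph: vertices are the nonzero zero divisors of $C_c(X)_F$, and distinct vertices $f,g$ are adjacent iff $fg=0$. The diameter is the maximum over pairs of vertices of the length of a shortest path between them; the girth is the length of a shortest cycle ($\infty$ if there is none). *)

theory Defs
  imports "HOL-Analysis.Analysis" "HOL-Library.Extended_Nat"
begin

definition cont_at :: "'a topology \<Rightarrow> ('a \<Rightarrow> real) \<Rightarrow> 'a \<Rightarrow> bool" where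
  "cont_at X f x \<longleftrightarrow>
     (\<forall>V. open V \<and> f x \<in> V \<longrightarrow> (\<exists>U. openin X U \<and> x \<in> U \<and> f ` U \<subseteq> V))"

text \<open>The ring C_c(X)_F: functions on topspace X (extended by 0 outside) with countable
  range and finitely many points of discontinuity; operations are pointwise.\<close>
definition CcF :: "'a topology \<Rightarrow> ('a \<Rightarrow> real) set" where
  "CcF X = {f. (\<forall>x. x \<notin> topspace X \<longrightarrow> f x = 0)
              \<and> countable (f ` topspace X)
              \<and> finite {x \<in> topspace X. \<not> cont_at X f x}}"

definition zd_vertices :: "'a topology \<Rightarrow> ('a \<Rightarrow> real) set" where
  "zd_vertices X = {f \<in> CcF X. f \<noteq> (\<lambda>x. 0) \<and>
                     (\<exists>g \<in> CcF X. g \<noteq> (\<lambda>x. 0) \<and> (\<lambda>x. f x * g x) = (\<lambda>x. 0))}"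

definition zd_adj :: "('a \<Rightarrow> real) \<Rightarrow> ('a \<Rightarrow> real) \<Rightarrow> bool" where
  "zd_adj f g \<longleftrightarrow> f \<noteq> g \<and> (\<lambda>x. f x * g x) = (\<lambda>x. 0)"

definition is_walk :: "'v set \<Rightarrow> ('v \<Rightarrow> 'v \<Rightarrow> bool) \<Rightarrow> 'v list \<Rightarrow> bool" where
  "is_walk V E xs \<longleftrightarrow> xs \<noteq> [] \<and> set xs \<subseteq> V \<and> (\<forall>i. Suc i < length xs \<longrightarrow> E (xs!i) (xs!Suc i))"

definition graph_dist :: "'v set \<Rightarrow> ('v \<Rightarrow> 'v \<Rightarrow> bool) \<Rightarrow> 'v \<Rightarrow> 'v \<Rightarrow> enat" where
  "graph_dist V E u v =
     (INF xs \<in> {xs. is_walk V E xs \<and> hd xs = u \<and> last xs = v}. enat (length xs - 1))"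

definition graph_diam :: "'v set \<Rightarrow> ('v \<Rightarrow> 'v \<Rightarrow> bool) \<Rightarrow> enat" where
  "graph_diam V E = (SUP u \<in> V. SUP v \<in> V. graph_dist V E u v)"

definition is_cycle :: "'v set \<Rightarrow> ('v \<Rightarrow> 'v \<Rightarrow> bool) \<Rightarrow> 'v list \<Rightarrow> bool" where
  "is_cycle V E cs \<longleftrightarrow> length cs \<ge> 3 \<and> distinct cs \<and> is_walk V E cs \<and> E (last cs) (hd cs)"

definition graph_girth :: "'v set \<Rightarrow> ('v \<Rightarrow> 'v \<Rightarrow> bool) \<Rightarrow> enat" where
  "graph_girth V E = (INF cs \<in> {cs. is_cycle V E cs}. enat (length cs))"

end

theory Submission
  imports Defs
begin

text \<open>In a \<open>T\<^sub>1\<close> space the indicator of a point \<open>p\<close>, and that of its complement, are continuous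
  off \<open>p\<close>, so they lie in \<open>C\<^sub>c(X)\<^sub>F\<close>. Indicators of distinct points are adjacent, giving
  triangles, and the indicator of \<open>p\<close> is adjacent to every vertex vanishing at \<open>p\<close>. Every
  vertex vanishes somewhere, so two vertices \<open>f, g\<close> vanishing at \<open>p, q\<close> are joined by the walk
  \<open>f, \<chi>\<^sub>p, \<chi>\<^sub>q, g\<close>. Conversely, the indicators of \<open>X - {a}\<close> and \<open>X - {b}\<close> are not adjacent
  (they are both \<open>1\<close> at a third point), and a common neighbour would vanish on their supports,
  which cover \<open>X\<close>; so their distance is 3.\<close>

lemma is_walk_singleton [simp]: "is_walk V E [x] \<longleftrightarrow> x \<in> V"
  unfolding is_walk_def by auto

lemma is_walk_Cons_Cons [simp]:
  "is_walk V E (x # y # xs) \<longleftrightarrow> x \<in> V \<and> E x y \<and> is_walk V E (y # xs)"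
proof
  assume "is_walk V E (x # y # xs)"
  then have set: "set (x # y # xs) \<subseteq> V"
    and step: "\<And>i. Suc i < length (x # y # xs) \<Longrightarrow> E ((x # y # xs) ! i) ((x # y # xs) ! Suc i)"
    unfolding is_walk_def by blast+
  have "E ((y # xs) ! i) ((y # xs) ! Suc i)" if "Suc i < length (y # xs)" for i
    using step[of "Suc i"] that by simp
  with set step[of 0] show "x \<in> V \<and> E x y \<and> is_walk V E (y # xs)"
    unfolding is_walk_def by simp
next
  assume "x \<in> V \<and> E x y \<and> is_walk V E (y # xs)"
  then show "is_walk V E (x # y # xs)"
    unfolding is_walk_def by (auto simp: less_Suc_eq_0_disj)
qed

lemma graph_dist_le_walk:
  assumes "is_walk V E xs" "hd xs = u" "last xs = v"
  shows "graph_dist V E u v \<le> enat (length xs - 1)"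
  unfolding graph_dist_def by (rule INF_lower) (use assms in simp)

lemma graph_dist_ge_3I:
  assumes "u \<noteq> v" "\<not> E u v" "\<And>w. w \<in> V \<Longrightarrow> E u w \<Longrightarrow> E w v \<Longrightarrow> False"
  shows "3 \<le> graph_dist V E u v"
  unfolding graph_dist_def
proof (rule INF_greatest)
  fix xs assume xs: "xs \<in> {xs. is_walk V E xs \<and> hd xs = u \<and> last xs = v}"
  have "xs \<noteq> []" using xs unfolding is_walk_def by blast
  have "\<not> length xs < 4"
  proof
    assume "length xs < 4"
    with \<open>xs \<noteq> []\<close> consider x where "xs = [x]" | x y where "xs = [x, y]"
      | x y z where "xs = [x, y, z]"
      by (auto simp: numeral_eq_Suc length_Suc_conv less_Suc_eq)
    then show False
      by cases (use xs assms in auto)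
  qed
  then show "3 \<le> enat (length xs - 1)"
    by (simp add: numeral_eq_enat)
qed

lemma graph_girth_eq_3I:
  assumes "is_cycle V E [x, y, z]"
  shows "graph_girth V E = 3"
proof (rule antisym)
  show "graph_girth V E \<le> 3" unfolding graph_girth_def
    by (rule INF_lower2[of "[x, y, z]"]) (use assms in \<open>auto simp: numeral_eq_enat\<close>)
  show "3 \<le> graph_girth V E" unfolding graph_girth_def
    by (rule INF_greatest) (simp add: is_cycle_def numeral_eq_enat)
qed

lemma graph_diam_eqI:
  assumes "\<And>u v. u \<in> V \<Longrightarrow> v \<in> V \<Longrightarrow> graph_dist V E u v \<le> d"
    and "u \<in> V" "v \<in> V" "d \<le> graph_dist V E u v"
  shows "graph_diam V E = d"
  unfolding graph_diam_def
proof (rule antisym)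
  show "(SUP u \<in> V. SUP v \<in> V. graph_dist V E u v) \<le> d"
    using assms(1) by (intro SUP_least)
  show "d \<le> (SUP u \<in> V. SUP v \<in> V. graph_dist V E u v)"
    by (rule SUP_upper2[OF assms(2)], rule SUP_upper2[OF assms(3)], rule assms(4))
qed

lemma zd_adj_commute: "zd_adj f g \<longleftrightarrow> zd_adj g f"
  unfolding zd_adj_def by (auto simp: mult.commute)

lemma cont_at_locally_constant:
  assumes "openin X U" "x \<in> U" "\<And>y. y \<in> U \<Longrightarrow> f y = f x"
  shows "cont_at X f x"
  unfolding cont_at_def using assms by (metis image_subsetI)

lemma CcF_if_constant_off_point:
  assumes "t1_space X" "p \<in> topspace X"
    and zero: "\<And>x. x \<notin> topspace X \<Longrightarrow> f x = 0"
    and const: "\<And>x. x \<in> topspace X - {p} \<Longrightarrow> f x = k"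
  shows "f \<in> CcF X"
proof -
  have "openin X (topspace X - {p})"
    using assms(1,2) by (simp add: openin_diff t1_space_closedin_singleton)
  then have "{x \<in> topspace X. \<not> cont_at X f x} \<subseteq> {p}"
    using const by (auto intro: cont_at_locally_constant)
  moreover have "f ` topspace X \<subseteq> {f p, k}"
    using const by auto
  ultimately have "finite {x \<in> topspace X. \<not> cont_at X f x}" "finite (f ` topspace X)"
    by (auto intro: finite_subset)
  then show ?thesis
    unfolding CcF_def using zero by (auto intro: countable_finite)
qed

lemma CcF_vanishes_off_topspace: "f \<in> CcF X \<Longrightarrow> f x \<noteq> 0 \<Longrightarrow> x \<in> topspace X"
  unfolding CcF_def by blast

lemma zd_vertex_vanishes_somewhere:
  assumes "f \<in> zd_vertices X"
  obtains p r where "p \<in> topspace X" "f p = 0" "r \<in> topspace X" "f r \<noteq> 0"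
proof -
  obtain g where g: "g \<in> CcF X" "g \<noteq> (\<lambda>x. 0)" "(\<lambda>x. f x * g x) = (\<lambda>x. 0)"
    and f: "f \<in> CcF X" "f \<noteq> (\<lambda>x. 0)"
    using assms unfolding zd_vertices_def by blast
  obtain p where p: "g p \<noteq> 0" using g(2) by auto
  have "f p = 0" using fun_cong[OF g(3), of p] p by simp
  moreover obtain r where r: "f r \<noteq> 0" using f(2) by auto
  ultimately show thesis
    using that CcF_vanishes_off_topspace[OF g(1) p] CcF_vanishes_off_topspace[OF f(1) r] r
    by blast
qed

lemma indicator_singleton_in_CcF:
  assumes "t1_space X" "p \<in> topspace X"
  shows "(indicator {p} :: 'a \<Rightarrow> real) \<in> CcF X"
  by (rule CcF_if_constant_off_point[OF assms, where k = 0])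
    (use assms(2) in \<open>auto simp: indicator_def\<close>)

lemma indicator_cosingleton_in_CcF:
  assumes "t1_space X" "p \<in> topspace X"
  shows "(indicator (topspace X - {p}) :: 'a \<Rightarrow> real) \<in> CcF X"
  by (rule CcF_if_constant_off_point[OF assms, where k = 1]) auto

lemma zd_adj_indicator_singleton:
  assumes "f p = 0"
  shows "zd_adj f (indicator {p})"
proof -
  have "f \<noteq> indicator {p}" using assms by (metis indicator_simps(1) insertI1 zero_neq_one)
  then show ?thesis
    unfolding zd_adj_def using assms by (auto simp: indicator_def)
qed

lemma indicator_nonzero:
  assumes "x \<in> S"
  shows "(indicator S :: 'a \<Rightarrow> 'b::zero_neq_one) \<noteq> (\<lambda>x. 0)"
  using assms by (metis indicator_simps(1) zero_neq_one)

lemma zd_verticesI: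
  assumes "f \<in> CcF X" "g \<in> CcF X" "f \<noteq> (\<lambda>x. 0)" "g \<noteq> (\<lambda>x. 0)" "zd_adj f g"
  shows "f \<in> zd_vertices X"
  using assms unfolding zd_vertices_def zd_adj_def by blast

lemma indicator_singleton_in_zd_vertices:
  assumes "t1_space X" "p \<in> topspace X" "r \<in> topspace X" "r \<noteq> p"
  shows "(indicator {p} :: 'a \<Rightarrow> real) \<in> zd_vertices X"
proof (rule zd_verticesI)
  show "zd_adj (indicator {p}) (indicator {r} :: 'a \<Rightarrow> real)"
    using assms(4) by (intro zd_adj_indicator_singleton) simp
qed (simp_all add: indicator_singleton_in_CcF assms indicator_nonzero)

lemma indicator_cosingleton_in_zd_vertices:
  assumes "t1_space X" "p \<in> topspace X" "r \<in> topspace X" "r \<noteq> p"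
  shows "(indicator (topspace X - {p}) :: 'a \<Rightarrow> real) \<in> zd_vertices X"
proof (rule zd_verticesI)
  show "zd_adj (indicator (topspace X - {p})) (indicator {p} :: 'a \<Rightarrow> real)"
    by (intro zd_adj_indicator_singleton) simp
  show "(indicator (topspace X - {p}) :: 'a \<Rightarrow> real) \<noteq> (\<lambda>x. 0)"
    using assms(3,4) by (intro indicator_nonzero[of r]) simp
qed (simp_all add: indicator_singleton_in_CcF indicator_cosingleton_in_CcF assms indicator_nonzero)

lemma zd_dist_le_3:
  assumes "t1_space X" "f \<in> zd_vertices X" "g \<in> zd_vertices X"
  shows "graph_dist (zd_vertices X) zd_adj f g \<le> 3"
proof -
  obtain p r where p: "p \<in> topspace X" "f p = 0" and r: "r \<in> topspace X" "f r \<noteq> 0"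
    using zd_vertex_vanishes_somewhere[OF assms(2)] .
  obtain q s where q: "q \<in> topspace X" "g q = 0" and s: "s \<in> topspace X" "g s \<noteq> 0"
    using zd_vertex_vanishes_somewhere[OF assms(3)] .
  let ?\<chi>p = "indicator {p} :: 'a \<Rightarrow> real" and ?\<chi>q = "indicator {q} :: 'a \<Rightarrow> real"
  have vertices: "?\<chi>p \<in> zd_vertices X" "?\<chi>q \<in> zd_vertices X"
    using indicator_singleton_in_zd_vertices[OF assms(1) p(1) r(1)]
      indicator_singleton_in_zd_vertices[OF assms(1) q(1) s(1)] p q r s by auto
  have adj: "zd_adj f ?\<chi>p" "zd_adj ?\<chi>q g"
    using zd_adj_indicator_singleton[of f p] zd_adj_indicator_singleton[of g q] p(2) q(2)
    by (simp_all add: zd_adj_commute[of _ g])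
  consider "f = g" | "f \<noteq> g" "p = q" | "p \<noteq> q" by blast
  then obtain xs where "is_walk (zd_vertices X) zd_adj xs" "hd xs = f" "last xs = g" "length xs \<le> 4"
  proof cases
    case 1
    with assms show ?thesis by (intro that[of "[f]"]) simp_all
  next
    case 2
    with assms vertices adj show ?thesis by (intro that[of "[f, ?\<chi>p, g]"]) simp_all
  next
    case 3
    then have "zd_adj ?\<chi>p ?\<chi>q" by (intro zd_adj_indicator_singleton) simp
    with assms vertices adj show ?thesis by (intro that[of "[f, ?\<chi>p, ?\<chi>q, g]"]) simp_all
  qed
  then have "graph_dist (zd_vertices X) zd_adj f g \<le> enat (length xs - 1)"
    by (intro graph_dist_le_walk)
  also have "\<dots> \<le> 3"
    using \<open>length xs \<le> 4\<close> by (simp add: numeral_eq_enat)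
  finally show ?thesis .
qed

lemma zd_dist_indicator_cosingletons:
  assumes "a \<in> topspace X" "b \<in> topspace X" "c \<in> topspace X" "a \<noteq> b" "a \<noteq> c" "b \<noteq> c"
  shows "3 \<le> graph_dist (zd_vertices X) zd_adj
           (indicator (topspace X - {a})) (indicator (topspace X - {b}) :: 'a \<Rightarrow> real)"
proof (rule graph_dist_ge_3I)
  let ?f = "indicator (topspace X - {a}) :: 'a \<Rightarrow> real"
  and ?g = "indicator (topspace X - {b}) :: 'a \<Rightarrow> real"
  have "?f a = 0" "?g a = 1" "?f c * ?g c = 1"
    using assms by simp_all
  then show "?f \<noteq> ?g" "\<not> zd_adj ?f ?g"
    unfolding zd_adj_def by (metis zero_neq_one, metis one_neq_zero)
  fix h assume h: "h \<in> zd_vertices X" "zd_adj ?f h" "zd_adj h ?g"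
  have "h \<in> CcF X" using h(1) unfolding zd_vertices_def by blast
  have "h x = 0" for x
  proof -
    have "?f x * h x = 0" "h x * ?g x = 0"
      using h(2,3) unfolding zd_adj_def by (simp_all add: fun_eq_iff)
    then show ?thesis
      using CcF_vanishes_off_topspace[OF \<open>h \<in> CcF X\<close>, of x] assms(4)
      by (auto simp: indicator_def split: if_splits)
  qed
  with h(1) show False unfolding zd_vertices_def by auto
qed

theorem theorem8p7:
  fixes X :: "'a topology"
  assumes "t1_space X"
    and "\<exists>a b c. a \<in> topspace X \<and> b \<in> topspace X \<and> c \<in> topspace X \<and> a \<noteq> b \<and> a \<noteq> c \<and> b \<noteq> c"
  shows "graph_diam (zd_vertices X) zd_adj = 3 \<and> graph_girth (zd_vertices X) zd_adj = 3"
proof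
  obtain a b c where abc: "a \<in> topspace X" "b \<in> topspace X" "c \<in> topspace X"
    "a \<noteq> b" "a \<noteq> c" "b \<noteq> c"
    using assms(2) by blast
  note vertex = indicator_singleton_in_zd_vertices[OF assms(1)]
  note covertex = indicator_cosingleton_in_zd_vertices[OF assms(1)]
  have "is_cycle (zd_vertices X) zd_adj [indicator {a}, indicator {b}, indicator {c} :: 'a \<Rightarrow> real]"
    unfolding is_cycle_def using abc vertex[of a b] vertex[of b a] vertex[of c a]
    by (auto simp: zd_adj_indicator_singleton indicator_def fun_eq_iff)
  then show "graph_girth (zd_vertices X) zd_adj = 3"
    by (rule graph_girth_eq_3I)
  show "graph_diam (zd_vertices X) zd_adj = 3"
    using zd_dist_le_3[OF assms(1)] covertex[of a c] covertex[of b c]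
      zd_dist_indicator_cosingletons[OF abc] abc
    by (intro graph_diam_eqI) auto
qed

end
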